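(* Let $\mathcal{O}$ be a nonempty set of quantum channels on $n$ qubits and let $\Psi$ be a quantum channel on $n$ qubits with $\gamma(\Psi)<\infty$. Let $\mathcal{O}_\Psi:=\mathcal{O}\cup\{\Psi\}$. Then for every sample $S=(z_1,\ldots,z_m)$ with $z_i\in\mathbb{F}_2^n\times\mathbb{F}_2^n$, \[ \hat{R}_S(\mathcal{F}(\mathcal{O}))\le \hat{R}_S(\mathcal{F}(\mathcal{O}_\Psi))\le (1+\gamma(\Psi))\,\hat{R}_S(\mathcal{F}(\mathcal{O})). \] Consequently, for every probability distribution $D$ on $\mathbb{F}_2^n\times\mathbb{F}_2^n$, \[ R_D(\mathcal{F}(\mathcal{O}))\le R_D(\mathcal{F}(\mathcal{O}_\Psi))\le (1+\gamma(\Psi))\,R_D(\mathcal{F}(\mathcal{O})). \]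
   Context: A quantum channel on $n$ qubits is a completely positive trace-preserving linear map on $2^n\times 2^n$ complex matrices. For a channel (or, more generally, a linear map) $\Phi$, define $f_\Phi:\mathbb{F}_2^n\times\mathbb{F}_2^n\to\mathbb{R}$ by $f_\Phi(x,y)=\mathrm{Tr}[\Phi(|x\rangle\langle x|)\,|y\rangle\langle y|]$, where $|x\rangle$ is the computational basis state; $f_\Phi$ depends linearly on $\Phi$. For a set $\Omega$ of channels, $\mathcal{F}(\Omega)=\{f_\Phi:\Phi\in\Omega\}$. For a class $\mathcal{G}$ of real-valued functions and a sample $S=(z_1,\ldots,z_m)$, the empirical Rademacher complexity is $\hat{R}_S(\mathcal{G})=\mathbb{E}_{\epsilon}\big[\sup_{g\in\mathcal{G}}\frac1m\sum_{i=1}^m\epsilon_i g(z_i)\big]$, where $\epsilon_1,\ldots,\epsilon_m$ are i.i.d. uniform on $\{-1,+1\}$. For a distribution $D$, $R_D(\mathcal{G})=\mathbb{E}_{S\sim D^m}[\hat{R}_S(\mathcal{G})]$ (samples $z_i$ i.i.d. from $D$). $\mathrm{Conv}(\mathcal{O})$ is the convex hull of $\mathcal{O}$. The free robustness of a channel $\Psi$ with respect to $\mathcal{O}$ is $\gamma(\Psi)=\inf\{\lambda\ge0:\exists\,\Phi\in\mathrm{Conv}(\mathcal{O})\text{ with }(\Psi+\lambda\Phi)/(1+\lambda)\in\mathrm{Conv}(\mathcal{O})\}$. *)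

theory Defs
  imports "Jordan_Normal_Form.Matrix" "HOL-Probability.Product_PMF"
begin

definition psd :: "nat \<Rightarrow> complex mat \<Rightarrow> bool" where
  "psd N X \<longleftrightarrow> X \<in> carrier_mat N N \<and>
     (\<forall>v :: nat \<Rightarrow> complex.
        let q = (\<Sum>i<N. \<Sum>j<N. cnj (v i) * X $$ (i, j) * v j) in Im q = 0 \<and> Re q \<ge> 0)"

text \<open>(id_k tensor Phi) applied to a kN x kN matrix, viewed as a k x k block matrix
  of N x N blocks.\<close>
definition ampl :: "nat \<Rightarrow> nat \<Rightarrow> (complex mat \<Rightarrow> complex mat) \<Rightarrow> complex mat \<Rightarrow> complex mat" where
  "ampl N k \<Phi> X = Matrix.mat (k * N) (k * N) (\<lambda>(i, j).
      \<Phi> (Matrix.mat N N (\<lambda>(r, s). X $$ ((i div N) * N + r, (j div N) * N + s))) $$ (i mod N, j mod N))"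

definition is_cptp :: "nat \<Rightarrow> (complex mat \<Rightarrow> complex mat) \<Rightarrow> bool" where
  "is_cptp N \<Phi> \<longleftrightarrow>
     (\<forall>X \<in> carrier_mat N N. \<Phi> X \<in> carrier_mat N N) \<and>
     (\<forall>X \<in> carrier_mat N N. \<forall>Y \<in> carrier_mat N N. \<Phi> (X + Y) = \<Phi> X + \<Phi> Y) \<and>
     (\<forall>X \<in> carrier_mat N N. \<forall>c :: complex. \<Phi> (c \<cdot>\<^sub>m X) = c \<cdot>\<^sub>m \<Phi> X) \<and>
     (\<forall>X \<in> carrier_mat N N. (\<Sum>i<N. \<Phi> X $$ (i, i)) = (\<Sum>i<N. X $$ (i, i))) \<and>
     (\<forall>k. \<forall>X. psd (k * N) X \<longrightarrow> psd (k * N) (ampl N k \<Phi> X))"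

definition qchannel :: "nat \<Rightarrow> (complex mat \<Rightarrow> complex mat) \<Rightarrow> bool" where
  "qchannel n \<Phi> \<longleftrightarrow> is_cptp (2 ^ n) \<Phi>"

definition conv_maps :: "nat \<Rightarrow> (complex mat \<Rightarrow> complex mat) set \<Rightarrow> (complex mat \<Rightarrow> complex mat) set" where
  "conv_maps N \<O> = {\<Phi>. \<exists>k (c :: nat \<Rightarrow> real) F.
      (\<forall>i<k. 0 \<le> c i \<and> F i \<in> \<O>) \<and> (\<Sum>i<k. c i) = 1 \<and>
      (\<forall>X \<in> carrier_mat N N.
         \<Phi> X = Matrix.mat N N (\<lambda>(r, s). \<Sum>i<k. complex_of_real (c i) * F i X $$ (r, s)))}"

text \<open>Free robustness (value +infinity if no admissible lambda exists).\<close>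
definition robustness :: "nat \<Rightarrow> (complex mat \<Rightarrow> complex mat) set \<Rightarrow> (complex mat \<Rightarrow> complex mat) \<Rightarrow> ereal" where
  "robustness n \<O> \<Psi> = Inf (ereal ` {t::real. t \<ge> 0 \<and>
      (\<exists>\<Phi> \<in> conv_maps (2 ^ n) \<O>.
         (\<lambda>X. complex_of_real (1 / (1 + t)) \<cdot>\<^sub>m (\<Psi> X + complex_of_real t \<cdot>\<^sub>m \<Phi> X))
           \<in> conv_maps (2 ^ n) \<O>)})"

text \<open>Elements of F_2^n are encoded as natural numbers below 2^n (binary expansion),
  the computational basis state |x> being the x-th standard basis vector.\<close>
definition fchan :: "nat \<Rightarrow> (complex mat \<Rightarrow> complex mat) \<Rightarrow> nat \<times> nat \<Rightarrow> real" where
  "fchan n \<Phi> z = (case z of (x, y) \<Rightarrow>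
      Re (\<Phi> (Matrix.mat (2 ^ n) (2 ^ n) (\<lambda>(i, j). if i = x \<and> j = x then 1 else 0)) $$ (y, y)))"

definition Fset :: "nat \<Rightarrow> (complex mat \<Rightarrow> complex mat) set \<Rightarrow> (nat \<times> nat \<Rightarrow> real) set" where
  "Fset n \<O> = fchan n ` \<O>"

text \<open>Empirical Rademacher complexity of G on the sample S 0, ..., S (m-1); the
  expectation over the uniform signs is the average over all sign patterns, a sign
  pattern being encoded by the set A of indices i with eps_i = +1.\<close>
definition emp_rad :: "nat \<Rightarrow> (nat \<Rightarrow> 'z) \<Rightarrow> ('z \<Rightarrow> real) set \<Rightarrow> real" where
  "emp_rad m S G = (\<Sum>A \<in> Pow {..<m}.
      Sup ((\<lambda>g. (1 / real m) * (\<Sum>i<m. (if i \<in> A then 1 else -1) * g (S i))) ` G)) / 2 ^ m"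

definition rad :: "'z pmf \<Rightarrow> nat \<Rightarrow> ('z \<Rightarrow> real) set \<Rightarrow> real" where
  "rad D m G = measure_pmf.expectation (Pi_pmf {..<m} undefined (\<lambda>_. D)) (\<lambda>S. emp_rad m S G)"

end

theory Submission
  imports Defs
begin

text \<open>For every admissible weight t in the definition of the robustness,
  Psi = (1 + t) Psi' - t Phi with Phi and Psi' in the convex hull of O, hence
  f_Psi = (1 + t) f_Psi' - t f_Phi on every sample. For a fixed sign pattern the correlation of
  f_Psi' is at most the supremum over F(O), being that of a convex combination of members of F(O),
  whereas the correlation of f_Phi is kept as it is: summed over all sign patterns it vanishes.
  This gives the factor 1 + t; the infimum over t gives 1 + gamma(Psi), and the bound for R_D
  follows by taking expectations over the sample.\<close>

definition rademacher_corr :: "nat \<Rightarrow> (nat \<Rightarrow> 'z) \<Rightarrow> nat set \<Rightarrow> ('z \<Rightarrow> real) \<Rightarrow> real" where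
  "rademacher_corr m S A g = (1 / real m) * (\<Sum>i<m. (if i \<in> A then 1 else -1) * g (S i))"

lemma emp_rad_eq_sum_Sup:
  "emp_rad m S G = (\<Sum>A \<in> Pow {..<m}. Sup (rademacher_corr m S A ` G)) / 2 ^ m"
  unfolding emp_rad_def rademacher_corr_def by simp

lemma sum_Pow_sign_eq_0:
  assumes "i < (m::nat)"
  shows "(\<Sum>A\<in>Pow {..<m}. (if i \<in> A then 1 else -1 :: real)) = 0"
proof -
  let ?flip = "\<lambda>A. if i \<in> A then A - {i} else insert i A"
  have "(\<Sum>A\<in>Pow {..<m}. (if i \<in> A then 1 else -1 :: real))
      = (\<Sum>A\<in>Pow {..<m}. - (if i \<in> A then 1 else -1))"
    by (rule sum.reindex_bij_witness[of _ ?flip ?flip]) (use assms in auto)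
  then show ?thesis by (simp add: sum_negf)
qed

lemma sum_Pow_rademacher_corr_eq_0: "(\<Sum>A\<in>Pow {..<m}. rademacher_corr m S A g) = 0"
proof -
  have "(\<Sum>A\<in>Pow {..<m}. rademacher_corr m S A g) =
     (1 / real m) * (\<Sum>i<m. g (S i) * (\<Sum>A\<in>Pow {..<m}. (if i \<in> A then 1 else -1)))"
    unfolding rademacher_corr_def
    by (simp add: sum_distrib_left sum_distrib_right sum.swap[of _ "Pow _"] mult.commute)
  also have "\<dots> = 0" by (simp add: sum_Pow_sign_eq_0)
  finally show ?thesis .
qed

lemma rademacher_corr_cong:
  "(\<And>i. i < m \<Longrightarrow> f (S i) = g (S i)) \<Longrightarrow> rademacher_corr m S A f = rademacher_corr m S A g"
  unfolding rademacher_corr_def by (intro arg_cong[where f="\<lambda>x. _ * x"] sum.cong) auto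

lemma rademacher_corr_sum:
  "rademacher_corr m S A (\<lambda>z. \<Sum>l<k. c l * f l z) = (\<Sum>l<k. c l * rademacher_corr m S A (f l))"
  unfolding rademacher_corr_def by (simp add: sum_distrib_left sum.swap[of _ "{..<k}"] mult_ac)

lemma rademacher_corr_diff:
  "rademacher_corr m S A (\<lambda>z. a * f z - b * g z)
     = a * rademacher_corr m S A f - b * rademacher_corr m S A g"
  unfolding rademacher_corr_def by (simp add: sum_distrib_left sum_subtractf algebra_simps)

lemma bdd_above_rademacher_corr:
  assumes "\<forall>g\<in>G. \<forall>i<m. \<bar>g (S i)\<bar> \<le> B"
  shows "bdd_above (rademacher_corr m S A ` G)"
proof (rule bdd_aboveI2)
  fix g assume g: "g \<in> G"
  have "(\<Sum>i<m. (if i \<in> A then 1 else -1) * g (S i)) \<le> (\<Sum>i<m. \<bar>B\<bar>)"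
    by (rule sum_mono) (use assms g in \<open>fastforce simp: abs_le_iff\<close>)
  then show "rademacher_corr m S A g \<le> \<bar>B\<bar>"
    unfolding rademacher_corr_def by (cases "m = 0") (auto simp: field_simps)
qed

lemma rademacher_corr_convex_le_Sup:
  assumes bdd: "bdd_above (rademacher_corr m S A ` G)"
    and c: "\<forall>l<k. 0 \<le> c l \<and> f l \<in> G" "(\<Sum>l<k. c l) = 1"
    and g: "\<forall>i<m. g (S i) = (\<Sum>l<k. c l * f l (S i))"
  shows "rademacher_corr m S A g \<le> Sup (rademacher_corr m S A ` G)"
proof -
  have "rademacher_corr m S A g = (\<Sum>l<k. c l * rademacher_corr m S A (f l))"
    using g by (simp add: rademacher_corr_cong[where g="\<lambda>z. \<Sum>l<k. c l * f l z"]
        rademacher_corr_sum)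
  also have "\<dots> \<le> (\<Sum>l<k. c l * Sup (rademacher_corr m S A ` G))"
    using c(1) by (intro sum_mono mult_left_mono cSup_upper[OF _ bdd]) auto
  also have "\<dots> = Sup (rademacher_corr m S A ` G)"
    using c(2) by (simp add: sum_distrib_right[symmetric])
  finally show ?thesis .
qed

lemma emp_rad_nonneg:
  assumes "G \<noteq> {}" "\<And>A. bdd_above (rademacher_corr m S A ` G)"
  shows "0 \<le> emp_rad m S G"
proof -
  obtain g where "g \<in> G" using assms(1) by auto
  then have "(\<Sum>A\<in>Pow {..<m}. rademacher_corr m S A g)
      \<le> (\<Sum>A\<in>Pow {..<m}. Sup (rademacher_corr m S A ` G))"
    by (intro sum_mono cSup_upper assms(2)) auto
  then show ?thesis by (simp add: emp_rad_eq_sum_Sup sum_Pow_rademacher_corr_eq_0)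
qed

lemma emp_rad_le_insert:
  assumes "G \<noteq> {}" "\<And>A. bdd_above (rademacher_corr m S A ` G)"
  shows "emp_rad m S G \<le> emp_rad m S (insert p G)"
proof -
  have "(\<Sum>A\<in>Pow {..<m}. Sup (rademacher_corr m S A ` G))
      \<le> (\<Sum>A\<in>Pow {..<m}. Sup (rademacher_corr m S A ` insert p G))"
    by (rule sum_mono) (use assms in \<open>simp add: cSup_insert\<close>)
  then show ?thesis by (simp add: emp_rad_eq_sum_Sup divide_right_mono)
qed

lemma emp_rad_insert_affine_le:
  assumes "G \<noteq> {}" "\<And>A. bdd_above (rademacher_corr m S A ` G)" "(t::real) \<ge> 0"
    and q: "\<And>A. rademacher_corr m S A q \<le> Sup (rademacher_corr m S A ` G)"
    and r: "\<And>A. rademacher_corr m S A r \<le> Sup (rademacher_corr m S A ` G)"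
    and p: "\<forall>i<m. p (S i) = (1 + t) * q (S i) - t * r (S i)"
  shows "emp_rad m S (insert p G) \<le> (1 + t) * emp_rad m S G"
proof -
  let ?sup = "\<lambda>A. Sup (rademacher_corr m S A ` G)"
  have "(\<Sum>A\<in>Pow {..<m}. Sup (rademacher_corr m S A ` insert p G))
      \<le> (\<Sum>A\<in>Pow {..<m}. (1 + t) * ?sup A - t * rademacher_corr m S A r)"
  proof (rule sum_mono)
    fix A
    have "rademacher_corr m S A p = (1 + t) * rademacher_corr m S A q - t * rademacher_corr m S A r"
      using p by (simp add: rademacher_corr_cong[where g="\<lambda>z. (1 + t) * q z - t * r z"]
          rademacher_corr_diff)
    also have "\<dots> \<le> (1 + t) * ?sup A - t * rademacher_corr m S A r"
      using q[of A] \<open>t \<ge> 0\<close> by (simp add: mult_left_mono)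
    finally have "rademacher_corr m S A p \<le> (1 + t) * ?sup A - t * rademacher_corr m S A r" .
    moreover have "?sup A \<le> (1 + t) * ?sup A - t * rademacher_corr m S A r"
      using r[of A] \<open>t \<ge> 0\<close> by (simp add: algebra_simps mult_left_mono)
    ultimately show "Sup (rademacher_corr m S A ` insert p G)
        \<le> (1 + t) * ?sup A - t * rademacher_corr m S A r"
      using assms(1,2) by (simp add: cSup_insert)
  qed
  also have "\<dots> = (1 + t) * (\<Sum>A\<in>Pow {..<m}. ?sup A)"
    by (simp add: sum_subtractf sum_distrib_left[symmetric] sum_Pow_rademacher_corr_eq_0)
  finally show ?thesis by (simp add: emp_rad_eq_sum_Sup divide_right_mono)
qed

lemma rad_le_scaled:
  assumes "finite (set_pmf D)"
    and "\<And>S. S \<in> set_pmf (Pi_pmf {..<m} undefined (\<lambda>_. D)) \<Longrightarrow> emp_rad m S G \<le> c * emp_rad m S H"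
  shows "rad D m G \<le> c * rad D m H"
proof -
  let ?P = "Pi_pmf {..<m} undefined (\<lambda>_. D)"
  have "finite (set_pmf ?P)"
    using assms(1) by (auto simp: set_Pi_pmf)
  then have int: "integrable (measure_pmf ?P) f" for f :: "_ \<Rightarrow> real"
    by (rule integrable_measure_pmf_finite)
  have "rad D m G \<le> measure_pmf.expectation ?P (\<lambda>S. c * emp_rad m S H)"
    unfolding rad_def
    by (rule integral_mono_AE[OF int int]) (use assms(2) in \<open>auto simp: AE_measure_pmf_iff\<close>)
  then show ?thesis by (simp add: rad_def)
qed

lemma set_Pi_pmf_lessThan_apply:
  fixes m :: nat
  assumes "S \<in> set_pmf (Pi_pmf {..<m} dflt (\<lambda>_. D))" "i < m"
  shows "S i \<in> set_pmf D"
  using set_Pi_pmf_subset'[OF finite_lessThan[of m], of dflt "\<lambda>_. D"] assms by (auto simp: PiE_dflt_def)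

definition basis_proj :: "nat \<Rightarrow> nat \<Rightarrow> complex mat" where
  "basis_proj N x = Matrix.mat N N (\<lambda>(i, j). if i = x \<and> j = x then 1 else 0)"

lemma basis_proj_carrier [simp]: "basis_proj N x \<in> carrier_mat N N"
  by (simp add: basis_proj_def)

lemma fchan_basis_proj: "fchan n \<Phi> (x, y) = Re (\<Phi> (basis_proj (2 ^ n) x) $$ (y, y))"
  by (simp add: fchan_def basis_proj_def)

lemma psd_basis_proj: "psd N (basis_proj N x)"
proof -
  have "(\<Sum>i<N. \<Sum>j<N. cnj (v i) * basis_proj N x $$ (i, j) * v j)
      = (if x < N then cnj (v x) * v x else 0)" for v
  proof -
    have "(\<Sum>i<N. \<Sum>j<N. cnj (v i) * basis_proj N x $$ (i, j) * v j)
        = (\<Sum>i<N. \<Sum>j<N. if i = x then (if j = x then cnj (v i) * v j else 0) else 0)"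
      by (intro sum.cong refl) (auto simp: basis_proj_def)
    also have "\<dots> = (\<Sum>i<N. if i = x then (\<Sum>j<N. if j = x then cnj (v i) * v j else 0) else 0)"
      by (intro sum.cong refl) auto
    finally show ?thesis by (simp add: sum.delta)
  qed
  then show ?thesis unfolding psd_def Let_def by auto
qed

lemma psd_diag_nonneg:
  assumes "psd N X" "z < N"
  shows "0 \<le> Re (X $$ (z, z))"
proof -
  let ?v = "\<lambda>i. if i = z then 1 else (0::complex)"
  have "(\<Sum>i<N. \<Sum>j<N. cnj (?v i) * X $$ (i, j) * ?v j)
      = (\<Sum>i<N. \<Sum>j<N. if i = z then (if j = z then X $$ (i, j) else 0) else 0)"
    by (intro sum.cong refl) auto
  also have "\<dots> = (\<Sum>i<N. if i = z then (\<Sum>j<N. if j = z then X $$ (i, j) else 0) else 0)"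
    by (intro sum.cong refl) auto
  also have "\<dots> = X $$ (z, z)" using assms(2) by (simp add: sum.delta)
  finally have quad: "(\<Sum>i<N. \<Sum>j<N. cnj (?v i) * X $$ (i, j) * ?v j) = X $$ (z, z)" .
  have "\<forall>v. 0 \<le> Re (\<Sum>i<N. \<Sum>j<N. cnj (v i) * X $$ (i, j) * v j)"
    using assms(1) unfolding psd_def Let_def by blast
  then have "0 \<le> Re (\<Sum>i<N. \<Sum>j<N. cnj (?v i) * X $$ (i, j) * ?v j)" by (rule spec)
  then show ?thesis by (simp only: quad)
qed

lemma ampl_one:
  assumes "X \<in> carrier_mat N N" "\<Phi> X \<in> carrier_mat N N"
  shows "ampl N 1 \<Phi> X = \<Phi> X"
proof -
  have "Matrix.mat N N (($$) X) = X" using assms(1) by (intro eq_matI) auto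
  then show ?thesis using assms by (intro eq_matI) (auto simp: ampl_def)
qed

lemma cptp_psd:
  assumes "is_cptp N \<Phi>" "psd N X"
  shows "psd N (\<Phi> X)"
proof -
  have "X \<in> carrier_mat N N" using assms(2) by (simp add: psd_def)
  moreover from this have "\<Phi> X \<in> carrier_mat N N" using assms(1) by (simp add: is_cptp_def)
  moreover have "psd N (ampl N 1 \<Phi> X)"
    using assms unfolding is_cptp_def by (metis mult_1)
  ultimately show ?thesis by (simp only: ampl_one)
qed

lemma fchan_bounds:
  assumes "qchannel n \<Phi>" "y < 2 ^ n"
  shows "0 \<le> fchan n \<Phi> (x, y)" "fchan n \<Phi> (x, y) \<le> 1"
proof -
  let ?N = "2 ^ n :: nat" and ?Y = "\<Phi> (basis_proj (2 ^ n) x)"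
  have cptp: "is_cptp ?N \<Phi>" using assms(1) by (simp add: qchannel_def)
  have diag: "0 \<le> Re (?Y $$ (z, z))" if "z < ?N" for z
    using psd_diag_nonneg[OF cptp_psd[OF cptp psd_basis_proj] that] .
  have "(\<Sum>i<?N. ?Y $$ (i, i)) = (\<Sum>i<?N. basis_proj ?N x $$ (i, i))"
    using cptp unfolding is_cptp_def by simp
  also have "\<dots> = (\<Sum>i<?N. if i = x then 1 else 0)"
    by (intro sum.cong refl) (auto simp: basis_proj_def)
  finally have "(\<Sum>i<?N. Re (?Y $$ (i, i))) \<le> 1" by (simp add: sum.delta flip: Re_sum)
  moreover have "Re (?Y $$ (y, y)) \<le> (\<Sum>i<?N. Re (?Y $$ (i, i)))"
    by (rule member_le_sum) (use assms(2) diag in auto)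
  ultimately show "0 \<le> fchan n \<Phi> (x, y)" "fchan n \<Phi> (x, y) \<le> 1"
    using diag[OF assms(2)] by (simp_all add: fchan_basis_proj)
qed

lemma conv_maps_carrier:
  "\<Phi> \<in> conv_maps N \<O> \<Longrightarrow> X \<in> carrier_mat N N \<Longrightarrow> \<Phi> X \<in> carrier_mat N N"
  unfolding conv_maps_def by auto

lemma fchan_conv_maps:
  assumes "\<Phi> \<in> conv_maps (2 ^ n) \<O>"
  obtains k :: nat and c F where "\<forall>l<k. 0 \<le> c l \<and> F l \<in> \<O>" "(\<Sum>l<k. c l) = 1"
    "\<And>x y. y < 2 ^ n \<Longrightarrow> fchan n \<Phi> (x, y) = (\<Sum>l<k. c l * fchan n (F l) (x, y))"
proof -
  obtain k :: nat and c F where "\<forall>l<k. 0 \<le> c l \<and> F l \<in> \<O>" "(\<Sum>l<k. c l) = 1"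
    and \<Phi>: "\<forall>X \<in> carrier_mat (2 ^ n) (2 ^ n). \<Phi> X
        = Matrix.mat (2 ^ n) (2 ^ n) (\<lambda>(r, s). \<Sum>l<k. complex_of_real (c l) * F l X $$ (r, s))"
    using assms unfolding conv_maps_def by blast
  moreover have "fchan n \<Phi> (x, y) = (\<Sum>l<k. c l * fchan n (F l) (x, y))" if "y < 2 ^ n" for x y
    using \<Phi> that by (simp add: fchan_basis_proj Re_sum)
  ultimately show ?thesis using that by blast
qed

lemma bdd_above_rademacher_corr_Fset:
  assumes "\<forall>\<Phi> \<in> \<O>. qchannel n \<Phi>" "\<forall>i<m. snd (S i) < 2 ^ n"
  shows "bdd_above (rademacher_corr m S A ` Fset n \<O>)"
proof (rule bdd_above_rademacher_corr[of _ _ _ 1], intro ballI allI impI)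
  fix g i assume "g \<in> Fset n \<O>" "i < m"
  then obtain \<Phi> x y where "qchannel n \<Phi>" "g = fchan n \<Phi>" "S i = (x, y)" "y < 2 ^ n"
    using assms by (metis Fset_def imageE prod.collapse snd_conv)
  then show "\<bar>g (S i)\<bar> \<le> 1" using fchan_bounds[of n \<Phi> y x] by simp
qed

lemma rademacher_corr_conv_maps_le_Sup:
  assumes "\<Phi> \<in> conv_maps (2 ^ n) \<O>" "\<forall>\<Phi> \<in> \<O>. qchannel n \<Phi>" "\<forall>i<m. snd (S i) < 2 ^ n"
  shows "rademacher_corr m S A (fchan n \<Phi>) \<le> Sup (rademacher_corr m S A ` Fset n \<O>)"
proof -
  obtain k :: nat and c F where "\<forall>l<k. 0 \<le> c l \<and> F l \<in> \<O>" "(\<Sum>l<k. c l) = 1"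
    and \<Phi>: "\<And>x y. y < 2 ^ n \<Longrightarrow> fchan n \<Phi> (x, y) = (\<Sum>l<k. c l * fchan n (F l) (x, y))"
    using fchan_conv_maps[OF assms(1)] by blast
  moreover have "\<forall>i<m. fchan n \<Phi> (S i) = (\<Sum>l<k. c l * fchan n (F l) (S i))"
    using \<Phi> assms(3) by (metis prod.collapse)
  ultimately show ?thesis
    using bdd_above_rademacher_corr_Fset[OF assms(2,3)]
    by (intro rademacher_corr_convex_le_Sup[where k=k and c=c and f="\<lambda>l. fchan n (F l)"])
      (auto simp: Fset_def)
qed

definition robust_weights ::
    "nat \<Rightarrow> (complex mat \<Rightarrow> complex mat) set \<Rightarrow> (complex mat \<Rightarrow> complex mat) \<Rightarrow> real set" where
  "robust_weights n \<O> \<Psi> = {t. t \<ge> 0 \<and>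
      (\<exists>\<Phi> \<in> conv_maps (2 ^ n) \<O>.
         (\<lambda>X. complex_of_real (1 / (1 + t)) \<cdot>\<^sub>m (\<Psi> X + complex_of_real t \<cdot>\<^sub>m \<Phi> X))
           \<in> conv_maps (2 ^ n) \<O>)}"

lemma real_of_robustness:
  assumes "robustness n \<O> \<Psi> < \<infinity>"
  shows "robust_weights n \<O> \<Psi> \<noteq> {}"
    and "real_of_ereal (robustness n \<O> \<Psi>) = Inf (robust_weights n \<O> \<Psi>)"
proof -
  have rob: "robustness n \<O> \<Psi> = Inf (ereal ` robust_weights n \<O> \<Psi>)"
    unfolding robustness_def robust_weights_def ..
  show ne: "robust_weights n \<O> \<Psi> \<noteq> {}"
    using assms by (auto simp: rob top_ereal_def)
  have "bdd_below (robust_weights n \<O> \<Psi>)"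
    unfolding robust_weights_def by (rule bdd_belowI[of _ 0]) auto
  then show "real_of_ereal (robustness n \<O> \<Psi>) = Inf (robust_weights n \<O> \<Psi>)"
    using ereal_Inf'[OF _ ne] rob by (metis real_of_ereal.simps(1))
qed

lemma le_one_plus_Inf_mult:
  fixes T :: "real set"
  assumes "T \<noteq> {}" "\<And>t. t \<in> T \<Longrightarrow> 0 \<le> t" "\<And>t. t \<in> T \<Longrightarrow> a \<le> (1 + t) * b" "0 \<le> b"
  shows "a \<le> (1 + Inf T) * b"
proof (cases "b = 0")
  case True
  then show ?thesis using assms by auto
next
  case False
  with assms(4) have b: "b > 0" by simp
  have "a / b - 1 \<le> Inf T"
    by (rule cInf_greatest[OF assms(1)]) (use assms(3) b in \<open>simp add: field_simps\<close>)
  then show ?thesis using b by (simp add: field_simps)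
qed

lemma fchan_robust_decomp:
  assumes "qchannel n \<Psi>" "\<Phi> \<in> conv_maps (2 ^ n) \<O>" "(t::real) \<ge> 0" "y < 2 ^ n"
  shows "fchan n \<Psi> (x, y) = (1 + t)
      * fchan n (\<lambda>X. complex_of_real (1 / (1 + t)) \<cdot>\<^sub>m (\<Psi> X + complex_of_real t \<cdot>\<^sub>m \<Phi> X)) (x, y)
      - t * fchan n \<Phi> (x, y)"
proof -
  let ?E = "basis_proj (2 ^ n) x"
  have "\<Psi> ?E \<in> carrier_mat (2 ^ n) (2 ^ n)"
    using assms(1) by (simp add: qchannel_def is_cptp_def)
  moreover have "\<Phi> ?E \<in> carrier_mat (2 ^ n) (2 ^ n)"
    using conv_maps_carrier[OF assms(2)] by simp
  ultimately have "(complex_of_real (1 / (1 + t)) \<cdot>\<^sub>m (\<Psi> ?E + complex_of_real t \<cdot>\<^sub>m \<Phi> ?E)) $$ (y, y)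
      = complex_of_real (1 / (1 + t)) * (\<Psi> ?E $$ (y, y) + complex_of_real t * \<Phi> ?E $$ (y, y))"
    using assms(4) by simp
  then have "fchan n (\<lambda>X. complex_of_real (1 / (1 + t)) \<cdot>\<^sub>m (\<Psi> X + complex_of_real t \<cdot>\<^sub>m \<Phi> X)) (x, y)
      = (1 / (1 + t)) * (fchan n \<Psi> (x, y) + t * fchan n \<Phi> (x, y))"
    by (simp add: fchan_basis_proj)
  then show ?thesis using assms(3) by (simp add: field_simps)
qed

lemma emp_rad_Fset_insert_le_weight:
  assumes "\<O> \<noteq> {}" "\<forall>\<Phi> \<in> \<O>. qchannel n \<Phi>" "qchannel n \<Psi>"
    and t: "t \<in> robust_weights n \<O> \<Psi>"
    and S: "\<forall>i<m. snd (S i) < 2 ^ n"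
  shows "emp_rad m S (Fset n (insert \<Psi> \<O>)) \<le> (1 + t) * emp_rad m S (Fset n \<O>)"
proof -
  obtain \<Phi> where t0: "t \<ge> 0" and \<Phi>: "\<Phi> \<in> conv_maps (2 ^ n) \<O>"
    and \<Psi>': "(\<lambda>X. complex_of_real (1 / (1 + t)) \<cdot>\<^sub>m (\<Psi> X + complex_of_real t \<cdot>\<^sub>m \<Phi> X))
        \<in> conv_maps (2 ^ n) \<O>" (is "?\<Psi>' \<in> _")
    using t unfolding robust_weights_def by blast
  have "Fset n \<O> \<noteq> {}" using assms(1) by (simp add: Fset_def)
  moreover have "\<forall>i<m. fchan n \<Psi> (S i) = (1 + t) * fchan n ?\<Psi>' (S i) - t * fchan n \<Phi> (S i)"
    using fchan_robust_decomp[OF assms(3) \<Phi> t0] S by (metis prod.collapse)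
  ultimately have "emp_rad m S (insert (fchan n \<Psi>) (Fset n \<O>)) \<le> (1 + t) * emp_rad m S (Fset n \<O>)"
    using emp_rad_insert_affine_le bdd_above_rademacher_corr_Fset[OF assms(2) S] t0
      rademacher_corr_conv_maps_le_Sup[OF \<Psi>' assms(2) S]
      rademacher_corr_conv_maps_le_Sup[OF \<Phi> assms(2) S]
    by blast
  then show ?thesis by (simp add: Fset_def)
qed

lemma emp_rad_Fset_insert_bounds:
  assumes "\<O> \<noteq> {}" "\<forall>\<Phi> \<in> \<O>. qchannel n \<Phi>" "qchannel n \<Psi>" "robustness n \<O> \<Psi> < \<infinity>"
    and S: "\<forall>i<m. snd (S i) < 2 ^ n"
  shows "emp_rad m S (Fset n \<O>) \<le> emp_rad m S (Fset n (insert \<Psi> \<O>))"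
    and "emp_rad m S (Fset n (insert \<Psi> \<O>))
      \<le> (1 + real_of_ereal (robustness n \<O> \<Psi>)) * emp_rad m S (Fset n \<O>)"
proof -
  have ne: "Fset n \<O> \<noteq> {}" using assms(1) by (simp add: Fset_def)
  note bdd = bdd_above_rademacher_corr_Fset[OF assms(2) S]
  show "emp_rad m S (Fset n \<O>) \<le> emp_rad m S (Fset n (insert \<Psi> \<O>))"
    using emp_rad_le_insert[OF ne bdd] by (simp add: Fset_def)
  show "emp_rad m S (Fset n (insert \<Psi> \<O>))
      \<le> (1 + real_of_ereal (robustness n \<O> \<Psi>)) * emp_rad m S (Fset n \<O>)"
    unfolding real_of_robustness(2)[OF assms(4)]
  proof (rule le_one_plus_Inf_mult[OF real_of_robustness(1)[OF assms(4)]])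
    fix t assume t: "t \<in> robust_weights n \<O> \<Psi>"
    then show "0 \<le> t" by (simp add: robust_weights_def)
    show "emp_rad m S (Fset n (insert \<Psi> \<O>)) \<le> (1 + t) * emp_rad m S (Fset n \<O>)"
      by (rule emp_rad_Fset_insert_le_weight[OF assms(1-3) t S])
  qed (rule emp_rad_nonneg[OF ne bdd])
qed

theorem theorem1:
  fixes n :: nat
    and \<O> :: "(complex mat \<Rightarrow> complex mat) set"
    and \<Psi> :: "complex mat \<Rightarrow> complex mat"
  assumes "\<O> \<noteq> {}"
    and "\<forall>\<Phi> \<in> \<O>. qchannel n \<Phi>"
    and "qchannel n \<Psi>"
    and "robustness n \<O> \<Psi> < \<infinity>"
  shows "(\<forall>m (S :: nat \<Rightarrow> nat \<times> nat).
            (\<forall>i<m. fst (S i) < 2 ^ n \<and> snd (S i) < 2 ^ n) \<longrightarrow>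
              emp_rad m S (Fset n \<O>) \<le> emp_rad m S (Fset n (insert \<Psi> \<O>)) \<and>
              emp_rad m S (Fset n (insert \<Psi> \<O>))
                \<le> (1 + real_of_ereal (robustness n \<O> \<Psi>)) * emp_rad m S (Fset n \<O>))
       \<and> (\<forall>(D :: (nat \<times> nat) pmf) m.
            set_pmf D \<subseteq> {..<2 ^ n} \<times> {..<2 ^ n} \<longrightarrow>
              rad D m (Fset n \<O>) \<le> rad D m (Fset n (insert \<Psi> \<O>)) \<and>
              rad D m (Fset n (insert \<Psi> \<O>))
                \<le> (1 + real_of_ereal (robustness n \<O> \<Psi>)) * rad D m (Fset n \<O>))"
proof -
  note emp = emp_rad_Fset_insert_bounds[OF assms]
  have rad: "rad D m (Fset n \<O>) \<le> rad D m (Fset n (insert \<Psi> \<O>)) \<and>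
      rad D m (Fset n (insert \<Psi> \<O>))
        \<le> (1 + real_of_ereal (robustness n \<O> \<Psi>)) * rad D m (Fset n \<O>)"
    if D: "set_pmf D \<subseteq> {..<2 ^ n} \<times> {..<2 ^ n}" for D :: "(nat \<times> nat) pmf" and m :: nat
  proof -
    have fin: "finite (set_pmf D)" using D by (rule finite_subset) simp
    have S: "\<forall>i<m. snd (S i) < 2 ^ n" if "S \<in> set_pmf (Pi_pmf {..<m} undefined (\<lambda>_. D))" for S
      using set_Pi_pmf_lessThan_apply[OF that] D by fastforce
    show ?thesis
      using rad_le_scaled[OF fin, of m _ 1] rad_le_scaled[OF fin] emp(1)[OF S] emp(2)[OF S]
      by (metis mult_1)
  qed
  show ?thesis using emp rad by simp
qed

end
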